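(* Let $\mathcal{A}\in\mathbb{R}^{[n_1,\ldots,n_m]}$. Then $\mathcal{A}$ is $\mathbb{R}$-Hermitian decomposable if and only if $\mathcal{A}_{i_1\ldots i_m j_1\ldots j_m}=\mathcal{A}_{k_1\ldots k_m l_1\ldots l_m}$ for all indices such that $\{i_s,j_s\}=\{k_s,l_s\}$ for every $s=1,\ldots,m$.
   Context: For positive integers $n_1,\ldots,n_m$, $\mathbb{R}^{[n_1,\ldots,n_m]}$ denotes the set of real tensors $\mathcal{H}\in\mathbb{R}^{n_1\times\cdots\times n_m\times n_1\times\cdots\times n_m}$ with $\mathcal{H}_{i_1\ldots i_m j_1\ldots j_m}=\mathcal{H}_{j_1\ldots j_m i_1\ldots i_m}$ for all indices (real Hermitian tensors). For vectors $v_i$, $[v_1,\ldots,v_m]_{\otimes h}:=v_1\otimes\cdots\otimes v_m\otimes\overline{v_1}\otimes\cdots\otimes\overline{v_m}$. A tensor $\mathcal{H}\in\mathbb{R}^{[n_1,\ldots,n_m]}$ is called $\mathbb{R}$-Hermitian decomposable if $\mathcal{H}=\sum_{i=1}^r\lambda_i[u_i^1,\ldots,u_i^m]_{\otimes h}$ for some real vectors $u_i^j\in\mathbb{R}^{n_j}$ and real scalars $\lambda_i$. *)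

theory Defs
  imports "HOL-Analysis.Analysis"
begin

(* Order-m dimensions n_1..n_m are given as a list ns of length m.
   A multi-index (i_1,...,i_m) is a nat list of length m with 0-based entries i!s < ns!s.
   A tensor in R^{n_1 x ... x n_m x n_1 x ... x n_m} is a function
   A :: nat list => nat list => real,  A i j = A_{i_1..i_m j_1..j_m};
   only its values at valid multi-indices matter. *)

definition valid_index :: "nat list \<Rightarrow> nat list \<Rightarrow> bool" where
  "valid_index ns i \<longleftrightarrow> length i = length ns \<and> (\<forall>s<length ns. i ! s < ns ! s)"

definition real_hermitian_tensor :: "nat list \<Rightarrow> (nat list \<Rightarrow> nat list \<Rightarrow> real) \<Rightarrow> bool" where
  "real_hermitian_tensor ns A \<longleftrightarrow>
     (\<forall>i j. valid_index ns i \<longrightarrow> valid_index ns j \<longrightarrow> A i j = A j i)"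

(* entry (i,j) of [v_1,...,v_m]_{\<otimes>h} for real vectors v_s (conjugation is trivial);
   v s is the s-th vector (0-based), with components v s 0, ..., v s (n_s - 1) *)
definition hermitian_rank_one :: "nat list \<Rightarrow> (nat \<Rightarrow> nat \<Rightarrow> real) \<Rightarrow> nat list \<Rightarrow> nat list \<Rightarrow> real" where
  "hermitian_rank_one ns v i j = (\<Prod>s<length ns. v s (i ! s)) * (\<Prod>s<length ns. v s (j ! s))"

definition R_hermitian_decomposable :: "nat list \<Rightarrow> (nat list \<Rightarrow> nat list \<Rightarrow> real) \<Rightarrow> bool" where
  "R_hermitian_decomposable ns A \<longleftrightarrow>
     (\<exists>(r::nat) (lam::nat \<Rightarrow> real) (u::nat \<Rightarrow> nat \<Rightarrow> nat \<Rightarrow> real).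
        \<forall>i j. valid_index ns i \<longrightarrow> valid_index ns j \<longrightarrow>
          A i j = (\<Sum>k<r. lam k * hermitian_rank_one ns (u k) i j))"

end

theory Submission
  imports Defs
begin

(* Decomposable tensors form a linear space, and each rank-one term is unchanged when
   i_s and j_s are swapped in any mode; this gives necessity. For sufficiency, induct on the
   number of modes. Splitting off the first mode,
     A (x#i) (y#j) = \<Sum>p\<le>q. S_pq(x,y) * A (p#i) (q#j),
   where S_pq is the symmetric matrix unit supported on {(p,q),(q,p)}. Each slice
   A (p#_) (q#_) still satisfies the symmetry condition, so it is decomposable by induction,
   and S_pq = (e_p+e_q)(e_p+e_q)^T - e_p e_p^T - e_q e_q^T (for p < q) is a combination of
   squares v v^T, which can be prepended to each rank-one term. *)

lemma R_hermitian_decomposable_cong: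
  assumes "R_hermitian_decomposable ns A"
    and "\<And>i j. valid_index ns i \<Longrightarrow> valid_index ns j \<Longrightarrow> B i j = A i j"
  shows "R_hermitian_decomposable ns B"
  using assms unfolding R_hermitian_decomposable_def by metis

lemma R_hermitian_decomposable_zero: "R_hermitian_decomposable ns (\<lambda>i j. 0)"
  unfolding R_hermitian_decomposable_def by (rule exI[of _ 0]) simp

lemma R_hermitian_decomposable_add:
  assumes "R_hermitian_decomposable ns A" "R_hermitian_decomposable ns B"
  shows "R_hermitian_decomposable ns (\<lambda>i j. A i j + B i j)"
proof -
  obtain r1 :: nat and lam1 u1 where A: "\<forall>i j. valid_index ns i \<longrightarrow> valid_index ns j \<longrightarrow>
      A i j = (\<Sum>k<r1. lam1 k * hermitian_rank_one ns (u1 k) i j)"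
    using assms(1) unfolding R_hermitian_decomposable_def by blast
  obtain r2 :: nat and lam2 u2 where B: "\<forall>i j. valid_index ns i \<longrightarrow> valid_index ns j \<longrightarrow>
      B i j = (\<Sum>k<r2. lam2 k * hermitian_rank_one ns (u2 k) i j)"
    using assms(2) unfolding R_hermitian_decomposable_def by blast
  define lam where "lam k = (if k < r1 then lam1 k else lam2 (k - r1))" for k
  define u where "u k = (if k < r1 then u1 k else u2 (k - r1))" for k
  have sum_split: "(\<Sum>k<r1 + r. f k) = (\<Sum>k<r1. f k) + (\<Sum>k<r. f (r1 + k))"
    for r and f :: "nat \<Rightarrow> real"
    by (induction r) (auto simp: add.assoc)
  show ?thesis
    unfolding R_hermitian_decomposable_def
    by (intro exI[of _ "r1 + r2"] exI[of _ lam] exI[of _ u] allI impI)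
      (simp add: sum_split A B lam_def u_def)
qed

lemma R_hermitian_decomposable_scale:
  assumes "R_hermitian_decomposable ns A"
  shows "R_hermitian_decomposable ns (\<lambda>i j. c * A i j)"
proof -
  obtain r :: nat and lam u where A: "\<forall>i j. valid_index ns i \<longrightarrow> valid_index ns j \<longrightarrow>
      A i j = (\<Sum>k<r. lam k * hermitian_rank_one ns (u k) i j)"
    using assms unfolding R_hermitian_decomposable_def by blast
  show ?thesis
    unfolding R_hermitian_decomposable_def
    by (intro exI[of _ r] exI[of _ "\<lambda>k. c * lam k"] exI[of _ u])
      (simp add: A sum_distrib_left mult.assoc)
qed

lemma R_hermitian_decomposable_sum:
  assumes "finite S" "\<And>x. x \<in> S \<Longrightarrow> R_hermitian_decomposable ns (A x)"
  shows "R_hermitian_decomposable ns (\<lambda>i j. \<Sum>x\<in>S. A x i j)"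
  using assms
proof (induction S rule: finite_induct)
  case empty
  then show ?case by (simp add: R_hermitian_decomposable_zero)
next
  case (insert x S)
  then show ?case using R_hermitian_decomposable_add[of ns "A x"] by simp
qed

lemma valid_index_Cons_iff:
  "valid_index (a # ns) I \<longleftrightarrow> (\<exists>x i. I = x # i \<and> x < a \<and> valid_index ns i)"
  by (cases I) (auto simp: valid_index_def less_Suc_eq_0_disj)

lemma hermitian_rank_one_Cons:
  "hermitian_rank_one (a # ns) (\<lambda>s. if s = 0 then v else u (s - 1)) (x # i) (y # j)
     = v x * v y * hermitian_rank_one ns u i j"
  unfolding hermitian_rank_one_def by (simp only: length_Cons prod.lessThan_Suc_shift) simp

lemma R_hermitian_decomposable_Cons:
  assumes "R_hermitian_decomposable ns A"
  shows "R_hermitian_decomposable (a # ns) (\<lambda>I J. v (hd I) * v (hd J) * A (tl I) (tl J))"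
proof -
  obtain r :: nat and lam u where A: "\<forall>i j. valid_index ns i \<longrightarrow> valid_index ns j \<longrightarrow>
      A i j = (\<Sum>k<r. lam k * hermitian_rank_one ns (u k) i j)"
    using assms unfolding R_hermitian_decomposable_def by blast
  show ?thesis
    unfolding R_hermitian_decomposable_def
  proof (intro exI[of _ r] exI[of _ lam] exI[of _ "\<lambda>k s. if s = 0 then v else u k (s - 1)"] allI impI)
    fix I J assume "valid_index (a # ns) I" "valid_index (a # ns) J"
    then obtain x i y j where "I = x # i" "valid_index ns i" "J = y # j" "valid_index ns j"
      unfolding valid_index_Cons_iff by blast
    then show "v (hd I) * v (hd J) * A (tl I) (tl J) =
        (\<Sum>k<r. lam k * hermitian_rank_one (a # ns) (\<lambda>s. if s = 0 then v else u k (s - 1)) I J)"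
      using A by (simp add: hermitian_rank_one_Cons sum_distrib_left mult_ac)
  qed
qed

(* The side condition p \<le> q makes each unordered pair {p,q} occur once in \<Sum>p q. *)
definition sym_matrix_unit :: "nat \<Rightarrow> nat \<Rightarrow> nat \<Rightarrow> nat \<Rightarrow> real" where
  "sym_matrix_unit p q x y = (if p \<le> q \<and> {x, y} = {p, q} then 1 else 0)"

lemma R_hermitian_decomposable_sym_matrix_unit_Cons:
  assumes "R_hermitian_decomposable ns A"
  shows "R_hermitian_decomposable (a # ns)
           (\<lambda>I J. sym_matrix_unit p q (hd I) (hd J) * A (tl I) (tl J))"
proof -
  define e where "e p x = (if x = p then 1 else (0::real))" for p x :: nat
  consider "p < q" | "p = q" | "q < p" by linarith
  then show ?thesis
  proof cases
    case 1
    have "R_hermitian_decomposable (a # ns)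
       (\<lambda>I J. (\<lambda>x. e p x + e q x) (hd I) * (\<lambda>x. e p x + e q x) (hd J) * A (tl I) (tl J)
         + ((-1) * (e p (hd I) * e p (hd J) * A (tl I) (tl J))
         + (-1) * (e q (hd I) * e q (hd J) * A (tl I) (tl J))))"
      by (intro R_hermitian_decomposable_add R_hermitian_decomposable_scale
          R_hermitian_decomposable_Cons assms)
    then show ?thesis
      by (rule R_hermitian_decomposable_cong)
        (use 1 in \<open>auto simp: sym_matrix_unit_def e_def doubleton_eq_iff\<close>)
  next
    case 2
    have "R_hermitian_decomposable (a # ns) (\<lambda>I J. e p (hd I) * e p (hd J) * A (tl I) (tl J))"
      by (intro R_hermitian_decomposable_Cons assms)
    then show ?thesis
      by (rule R_hermitian_decomposable_cong)
        (use 2 in \<open>auto simp: sym_matrix_unit_def e_def doubleton_eq_iff\<close>)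
  next
    case 3
    then show ?thesis
      by (intro R_hermitian_decomposable_cong[OF R_hermitian_decomposable_zero])
        (simp add: sym_matrix_unit_def)
  qed
qed

lemma sum_sym_matrix_unit:
  fixes g :: "nat \<Rightarrow> nat \<Rightarrow> real"
  assumes "x < a" "y < a"
  shows "(\<Sum>p<a. \<Sum>q<a. sym_matrix_unit p q x y * g p q) = g (min x y) (max x y)"
proof -
  have "(\<Sum>p<a. \<Sum>q<a. sym_matrix_unit p q x y * g p q) =
        (\<Sum>p<a. \<Sum>q<a. if q = max x y then (if p = min x y then g p q else 0) else 0)"
    by (intro sum.cong refl) (auto simp: sym_matrix_unit_def doubleton_eq_iff min_def max_def)
  also have "\<dots> = g (min x y) (max x y)"
    using assms by (simp add: sum.delta min_def max_def)
  finally show ?thesis .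
qed

definition partially_symmetric :: "nat list \<Rightarrow> (nat list \<Rightarrow> nat list \<Rightarrow> real) \<Rightarrow> bool" where
  "partially_symmetric ns A \<longleftrightarrow>
     (\<forall>i j k l. valid_index ns i \<longrightarrow> valid_index ns j \<longrightarrow> valid_index ns k \<longrightarrow> valid_index ns l \<longrightarrow>
       (\<forall>s<length ns. {i ! s, j ! s} = {k ! s, l ! s}) \<longrightarrow> A i j = A k l)"

lemma partially_symmetric_Cons_D:
  assumes "partially_symmetric (a # ns) A"
    and "valid_index (a # ns) (x # i)" "valid_index (a # ns) (y # j)"
    and "valid_index (a # ns) (z # k)" "valid_index (a # ns) (w # l)"
    and "{x, y} = {z, w}" "\<forall>s<length ns. {i ! s, j ! s} = {k ! s, l ! s}"
  shows "A (x # i) (y # j) = A (z # k) (w # l)"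
proof -
  have "{(x # i) ! s, (y # j) ! s} = {(z # k) ! s, (w # l) ! s}" if "s < length (a # ns)" for s
    using assms(6,7) that by (cases s) auto
  then show ?thesis
    using assms(1-5) unfolding partially_symmetric_def by blast
qed

lemma partially_symmetric_slice:
  assumes "partially_symmetric (a # ns) A" "p < a" "q < a"
  shows "partially_symmetric ns (\<lambda>i j. A (p # i) (q # j))"
  unfolding partially_symmetric_def
proof (intro allI impI)
  fix i j k l
  assume "valid_index ns i" "valid_index ns j" "valid_index ns k" "valid_index ns l"
    and "\<forall>s<length ns. {i ! s, j ! s} = {k ! s, l ! s}"
  with assms show "A (p # i) (q # j) = A (p # k) (q # l)"
    by (intro partially_symmetric_Cons_D) (auto simp: valid_index_Cons_iff)
qed

lemma partially_symmetric_imp_R_hermitian_decomposable: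
  "partially_symmetric ns A \<Longrightarrow> R_hermitian_decomposable ns A"
proof (induction ns arbitrary: A)
  case Nil
  show ?case
    unfolding R_hermitian_decomposable_def
    by (intro exI[of _ 1] exI[of _ "\<lambda>k. A [] []"] exI[of _ undefined])
      (auto simp: valid_index_def hermitian_rank_one_def)
next
  case (Cons a ns)
  have "R_hermitian_decomposable (a # ns) (\<lambda>I J. \<Sum>p<a. \<Sum>q<a.
          sym_matrix_unit p q (hd I) (hd J) * A (p # tl I) (q # tl J))"
    by (intro R_hermitian_decomposable_sum R_hermitian_decomposable_sym_matrix_unit_Cons
        Cons.IH partially_symmetric_slice[OF Cons.prems]) auto
  then show ?case
  proof (rule R_hermitian_decomposable_cong)
    fix I J assume "valid_index (a # ns) I" "valid_index (a # ns) J"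
    then obtain x i y j where I: "I = x # i" "x < a" "valid_index ns i"
        and J: "J = y # j" "y < a" "valid_index ns j"
      unfolding valid_index_Cons_iff by blast
    have "A (x # i) (y # j) = A (min x y # i) (max x y # j)"
      using I J by (intro partially_symmetric_Cons_D[OF Cons.prems])
        (auto simp: valid_index_Cons_iff min_def max_def)
    then show "A I J = (\<Sum>p<a. \<Sum>q<a. sym_matrix_unit p q (hd I) (hd J) * A (p # tl I) (q # tl J))"
      using I J sum_sym_matrix_unit[OF I(2) J(2), of "\<lambda>p q. A (p # i) (q # j)"] by simp
  qed
qed

lemma hermitian_rank_one_swap:
  assumes "\<forall>s<length ns. {i ! s, j ! s} = {k ! s, l ! s}"
  shows "hermitian_rank_one ns v i j = hermitian_rank_one ns v k l"
proof -
  have "v s (i ! s) * v s (j ! s) = v s (k ! s) * v s (l ! s)" if "s < length ns" for s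
    using assms that by (auto simp: doubleton_eq_iff)
  then show ?thesis
    unfolding hermitian_rank_one_def prod.distrib[symmetric] by (intro prod.cong) auto
qed

lemma R_hermitian_decomposable_imp_partially_symmetric:
  assumes "R_hermitian_decomposable ns A"
  shows "partially_symmetric ns A"
proof -
  obtain r :: nat and lam u where A: "\<forall>i j. valid_index ns i \<longrightarrow> valid_index ns j \<longrightarrow>
      A i j = (\<Sum>k<r. lam k * hermitian_rank_one ns (u k) i j)"
    using assms unfolding R_hermitian_decomposable_def by blast
  show ?thesis
    unfolding partially_symmetric_def
  proof (intro allI impI)
    fix i j k l
    assume "valid_index ns i" "valid_index ns j" "valid_index ns k" "valid_index ns l"
      and "\<forall>s<length ns. {i ! s, j ! s} = {k ! s, l ! s}"
    then show "A i j = A k l"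
      using A hermitian_rank_one_swap[of ns i j k l] by simp
  qed
qed

theorem theorem3p2:
  fixes ns :: "nat list" and A :: "nat list \<Rightarrow> nat list \<Rightarrow> real"
  assumes "ns \<noteq> []"
    and "\<forall>s<length ns. 0 < ns ! s"
    and "real_hermitian_tensor ns A"
  shows "R_hermitian_decomposable ns A \<longleftrightarrow>
    (\<forall>i j k l. valid_index ns i \<longrightarrow> valid_index ns j \<longrightarrow> valid_index ns k \<longrightarrow> valid_index ns l \<longrightarrow>
       (\<forall>s<length ns. {i ! s, j ! s} = {k ! s, l ! s}) \<longrightarrow> A i j = A k l)"
  unfolding partially_symmetric_def[symmetric]
  using partially_symmetric_imp_R_hermitian_decomposable
    R_hermitian_decomposable_imp_partially_symmetric by blast

end
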